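(* Let $\mu$ be a $(C,\gamma)$-absolutely decaying measure on $\mathbb{R}$, let $K=\operatorname{supp}\mu$, let $0<\alpha\le\frac14\left(\frac{1}{3C}\right)^{1/\gamma}$, let $S\subset\mathbb{R}$ be $\alpha$-winning on $K$, and let $S'\subset S$ be countable. Then $S\setminus S'$ is $\alpha$-winning on $K$.
   Context: $B(x,\rho)$ denotes the closed ball. A locally finite Borel measure $\mu$ on $\mathbb{R}$ is $(C,\gamma)$-absolutely decaying if there is $\rho_0>0$ such that for all $0<\rho\le\rho_0$, $x\in\operatorname{supp}\mu$, $y\in\mathbb{R}$, $\varepsilon>0$: $\mu(B(x,\rho)\cap B(y,\varepsilon\rho))<C\varepsilon^\gamma\mu(B(x,\rho))$. Schmidt's game on a complete metric space $(X,d)$ with parameters $0<\alpha,\beta<1$ and target $S\subset X$: on $X\times\mathbb{R}_+$ write $(x_2,\rho_2)\le_s(x_1,\rho_1)$ if $\rho_2+d(x_1,x_2)\le\rho_1$. Bob picks $\omega_1=(x_1,\rho_1)$; then Alice and Bob alternately pick $\omega_k'=(x_k',\rho_k')\le_s\omega_k$ with $\rho_k'=\alpha\rho_k$ and $\omega_{k+1}\le_s\omega_k'$ with $\rho_{k+1}=\beta\rho_k'$. The nested closed balls intersect in a point $x_\infty$; Alice wins if $x_\infty\in S$. $S$ is $\alpha$-winning if for every $\beta\in(0,1)$ Alice has a strategy winning against all plays of Bob. For closed $K\subset\mathbb{R}$, $S\subset\mathbb{R}$ is $\alpha$-winning on $K$ if $S\cap K$ is $\alpha$-winning for the game played on $K$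 with the induced metric. *)

theory Defs
  imports "HOL-Analysis.Analysis"
begin

definition locally_finite_borel :: "real measure \<Rightarrow> bool" where
  "locally_finite_borel \<mu> \<longleftrightarrow> sets \<mu> = sets borel \<and>
     (\<forall>x. \<exists>r>0. emeasure \<mu> (ball x r) < \<infinity>)"

definition msupp :: "real measure \<Rightarrow> real set" where
  "msupp \<mu> = {x. \<forall>r>0. emeasure \<mu> (ball x r) > 0}"

definition abs_decaying :: "real measure \<Rightarrow> real \<Rightarrow> real \<Rightarrow> bool" where
  "abs_decaying \<mu> C \<gamma> \<longleftrightarrow> locally_finite_borel \<mu> \<and> C > 0 \<and> \<gamma> > 0 \<and>
     (\<exists>\<rho>0>0. \<forall>\<rho> x y \<epsilon>. 0 < \<rho> \<and> \<rho> \<le> \<rho>0 \<and> x \<in> msupp \<mu> \<and> \<epsilon> > 0 \<longrightarrow>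
        emeasure \<mu> (cball x \<rho> \<inter> cball y (\<epsilon> * \<rho>))
          < ennreal (C * \<epsilon> powr \<gamma>) * emeasure \<mu> (cball x \<rho>))"

text \<open>Schmidt's order on (centre, radius) pairs: w2 \<le>s w1.\<close>
definition le_s :: "real \<times> real \<Rightarrow> real \<times> real \<Rightarrow> bool" where
  "le_s w2 w1 \<longleftrightarrow> snd w2 + dist (fst w1) (fst w2) \<le> snd w1"

text \<open>Schmidt's game on the closed set K (induced metric), target S.
  Alice's strategy f maps the list of Bob's moves so far [w_1,...,w_k] to her move w_k'.
  Bob's moves are b 0, b 1, ... (b k is omega_(k+1)).\<close>
definition alice_move_ok :: "real set \<Rightarrow> real \<Rightarrow> real \<times> real \<Rightarrow> real \<times> real \<Rightarrow> bool" where
  "alice_move_ok K \<alpha> a w \<longleftrightarrow> fst a \<in> K \<and> snd a = \<alpha> * snd w \<and> le_s a w"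

definition bob_move_ok :: "real set \<Rightarrow> real \<Rightarrow> real \<times> real \<Rightarrow> real \<times> real \<Rightarrow> bool" where
  "bob_move_ok K \<beta> w a \<longleftrightarrow> fst w \<in> K \<and> snd w = \<beta> * snd a \<and> le_s w a"

definition winning_on :: "real set \<Rightarrow> real \<Rightarrow> real set \<Rightarrow> bool" where
  "winning_on K \<alpha> S \<longleftrightarrow>
    (\<forall>\<beta>. 0 < \<beta> \<and> \<beta> < 1 \<longrightarrow>
      (\<exists>f :: (real \<times> real) list \<Rightarrow> real \<times> real.
        \<forall>b :: nat \<Rightarrow> real \<times> real.
          fst (b 0) \<in> K \<and> snd (b 0) > 0 \<longrightarrow>
            (\<forall>k. (\<forall>j<k. bob_move_ok K \<beta> (b (Suc j)) (f (map b [0..<Suc j])))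
                   \<longrightarrow> alice_move_ok K \<alpha> (f (map b [0..<Suc k])) (b k)) \<and>
            ((\<forall>k. bob_move_ok K \<beta> (b (Suc k)) (f (map b [0..<Suc k])))
                \<longrightarrow> (\<Inter>k. cball (fst (b k)) (snd (b k))) \<inter> K \<subseteq> S)))"

end

theory Submission
  imports Defs
begin

text \<open>Alice plays two games at once. On even turns she follows a winning strategy for \<open>S\<close> with
  Bob's parameter \<open>\<beta>\<alpha>\<beta>\<close>, fed with Bob's even-numbered moves. On odd turns she steers away
  from the next point of an enumeration of \<open>S'\<close> listing every point infinitely often, so each
  point of \<open>S'\<close> is excluded from the outcome. Absolute decay makes such a dodge possible once
  the radius is small: by decay with \<open>\<epsilon> = 2\<alpha>/(1-\<alpha>)\<close>, the points of \<open>B(x, (1-\<alpha>)\<rho>)\<close> within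
  \<open>2\<alpha>\<rho>\<close> of the point to be avoided carry less than the measure of the whole ball, so the
  support meets the rest of it, and any such support point is a legal centre for Alice's ball
  of radius \<open>\<alpha>\<rho>\<close>.\<close>

lemma le_s_trans: "le_s a b \<Longrightarrow> le_s b c \<Longrightarrow> le_s a c"
  unfolding le_s_def using dist_triangle[of "fst c" "fst a" "fst b"] by linarith

lemma le_s_cball_subset: "le_s a b \<Longrightarrow> cball (fst a) (snd a) \<subseteq> cball (fst b) (snd b)"
  unfolding le_s_def by (simp add: cball_subset_cball_iff dist_commute add.commute)

lemma bob_move_ok_through_alice:
  assumes "bob_move_ok K \<beta> w1 a1" "alice_move_ok K \<alpha> a2 w1" "bob_move_ok K \<beta> w2 a2"
  shows "bob_move_ok K (\<beta> * \<alpha> * \<beta>) w2 a1"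
proof -
  have "le_s w2 a1"
    using assms le_s_trans unfolding bob_move_ok_def alice_move_ok_def by meson
  then show ?thesis
    using assms unfolding bob_move_ok_def alice_move_ok_def by (auto simp: algebra_simps)
qed

definition winning_strategy ::
    "real set \<Rightarrow> real \<Rightarrow> real \<Rightarrow> real set \<Rightarrow> ((real \<times> real) list \<Rightarrow> real \<times> real) \<Rightarrow> bool" where
  "winning_strategy K \<alpha> \<beta> S f \<longleftrightarrow>
    (\<forall>b. fst (b 0) \<in> K \<and> snd (b 0) > 0 \<longrightarrow>
      (\<forall>k. (\<forall>j<k. bob_move_ok K \<beta> (b (Suc j)) (f (map b [0..<Suc j])))
             \<longrightarrow> alice_move_ok K \<alpha> (f (map b [0..<Suc k])) (b k)) \<and>
      ((\<forall>k. bob_move_ok K \<beta> (b (Suc k)) (f (map b [0..<Suc k])))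
          \<longrightarrow> (\<Inter>k. cball (fst (b k)) (snd (b k))) \<inter> K \<subseteq> S))"

lemma winning_on_iff_winning_strategy:
  "winning_on K \<alpha> S \<longleftrightarrow> (\<forall>\<beta>. 0 < \<beta> \<and> \<beta> < 1 \<longrightarrow> (\<exists>f. winning_strategy K \<alpha> \<beta> S f))"
  unfolding winning_on_def winning_strategy_def ..

lemma winning_strategyI:
  assumes "\<And>b k. fst (b 0) \<in> K \<Longrightarrow> 0 < snd (b 0) \<Longrightarrow>
      (\<And>j. j < k \<Longrightarrow> bob_move_ok K \<beta> (b (Suc j)) (f (map b [0..<Suc j]))) \<Longrightarrow>
      alice_move_ok K \<alpha> (f (map b [0..<Suc k])) (b k)"
    and "\<And>b. fst (b 0) \<in> K \<Longrightarrow> 0 < snd (b 0) \<Longrightarrow>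
      (\<And>k. bob_move_ok K \<beta> (b (Suc k)) (f (map b [0..<Suc k]))) \<Longrightarrow>
      (\<Inter>k. cball (fst (b k)) (snd (b k))) \<inter> K \<subseteq> S"
  shows "winning_strategy K \<alpha> \<beta> S f"
  using assms unfolding winning_strategy_def by blast

lemma winning_strategy_legal:
  assumes "winning_strategy K \<alpha> \<beta> S f" "fst (b 0) \<in> K" "0 < snd (b 0)"
    and "\<And>j. j < k \<Longrightarrow> bob_move_ok K \<beta> (b (Suc j)) (f (map b [0..<Suc j]))"
  shows "alice_move_ok K \<alpha> (f (map b [0..<Suc k])) (b k)"
  using assms unfolding winning_strategy_def by blast

lemma winning_strategy_outcome:
  assumes "winning_strategy K \<alpha> \<beta> S f" "fst (b 0) \<in> K" "0 < snd (b 0)"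
    and "\<And>k. bob_move_ok K \<beta> (b (Suc k)) (f (map b [0..<Suc k]))"
  shows "(\<Inter>k. cball (fst (b k)) (snd (b k))) \<inter> K \<subseteq> S"
  using assms unfolding winning_strategy_def by blast

lemma play_radius:
  assumes "\<And>i. i < k \<Longrightarrow> alice_move_ok K \<alpha> (a i) (b i) \<and> bob_move_ok K \<beta> (b (Suc i)) (a i)"
  shows "snd (b k) = (\<beta> * \<alpha>) ^ k * snd (b 0)"
  using assms
proof (induction k)
  case (Suc k)
  then have "snd (b (Suc k)) = \<beta> * (\<alpha> * snd (b k))"
    unfolding alice_move_ok_def bob_move_ok_def by auto
  then show ?case using Suc by simp
qed simp

text \<open>A history of length \<open>k + 1\<close> asks for Alice's move at turn \<open>k\<close>; on even turns \<open>f\<close> is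
  consulted on Bob's even-numbered moves only.\<close>

definition interleave :: "('a list \<Rightarrow> 'b) \<Rightarrow> ('a list \<Rightarrow> 'b) \<Rightarrow> 'a list \<Rightarrow> 'b" where
  "interleave f h ws =
    (if odd (length ws) then f (map (\<lambda>i. ws ! (2 * i)) [0..<Suc (length ws div 2)]) else h ws)"

lemma interleave_even_turn:
  "interleave f h (map b [0..<Suc (2 * m)]) = f (map (\<lambda>j. b (2 * j)) [0..<Suc m])"
proof -
  have "map (\<lambda>i. map b [0..<Suc (2 * m)] ! (2 * i)) [0..<Suc m] = map (\<lambda>j. b (2 * j)) [0..<Suc m]"
    by (rule map_cong) (auto simp del: upt_Suc)
  moreover have "odd (length (map b [0..<Suc (2 * m)]))" "length (map b [0..<Suc (2 * m)]) div 2 = m"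
    by simp_all
  ultimately show ?thesis unfolding interleave_def by (simp only: not_False_eq_True if_True)
qed

lemma interleave_odd_turn:
  "interleave f h (map b [0..<Suc (Suc (2 * m))]) = h (map b [0..<Suc (Suc (2 * m))])"
  unfolding interleave_def by (simp del: upt_Suc)

lemma interleave_even_subplay:
  assumes "bob_move_ok K \<beta> (b (Suc (2 * j))) (interleave f h (map b [0..<Suc (2 * j)]))"
    and "alice_move_ok K \<alpha> (interleave f h (map b [0..<Suc (Suc (2 * j))])) (b (Suc (2 * j)))"
    and "bob_move_ok K \<beta> (b (Suc (Suc (2 * j)))) (interleave f h (map b [0..<Suc (Suc (2 * j))]))"
  shows "bob_move_ok K (\<beta> * \<alpha> * \<beta>) (b (2 * Suc j)) (f (map (\<lambda>i. b (2 * i)) [0..<Suc j]))"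
  using bob_move_ok_through_alice[OF assms] unfolding interleave_even_turn by simp

lemma interleave_legal:
  assumes f: "winning_strategy K \<alpha> (\<beta> * \<alpha> * \<beta>) S f"
    and h: "\<And>ws. fst (last ws) \<in> K \<Longrightarrow> snd (last ws) > 0 \<Longrightarrow> alice_move_ok K \<alpha> (h ws) (last ws)"
    and "0 < \<alpha>" "0 < \<beta>" and b0: "fst (b 0) \<in> K" "0 < snd (b 0)"
    and "\<And>j. j < k \<Longrightarrow> bob_move_ok K \<beta> (b (Suc j)) (interleave f h (map b [0..<Suc j]))"
  shows "alice_move_ok K \<alpha> (interleave f h (map b [0..<Suc k])) (b k)"
  using assms(7)
proof (induction k rule: less_induct)
  case (less k)
  then have prefix: "alice_move_ok K \<alpha> (interleave f h (map b [0..<Suc i])) (b i)"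
      "bob_move_ok K \<beta> (b (Suc i)) (interleave f h (map b [0..<Suc i]))"
    if "i < k" for i
    using that by auto
  consider m where "k = 2 * m" | m where "k = Suc (2 * m)"
    by (metis evenE oddE Suc_eq_plus1)
  then show ?case
  proof cases
    case 1
    have "bob_move_ok K (\<beta> * \<alpha> * \<beta>) (b (2 * Suc j)) (f (map (\<lambda>i. b (2 * i)) [0..<Suc j]))"
      if "j < m" for j
      using that 1 by (intro interleave_even_subplay[where h = h] prefix) auto
    then have "alice_move_ok K \<alpha> (f (map (\<lambda>i. b (2 * i)) [0..<Suc m])) (b (2 * m))"
      using winning_strategy_legal[OF f, of "\<lambda>i. b (2 * i)"] b0 by simp
    then show ?thesis unfolding 1 interleave_even_turn .
  next
    case 2
    have "snd (b k) = (\<beta> * \<alpha>) ^ k * snd (b 0)"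
      by (rule play_radius) (use prefix in blast)
    then have "snd (b k) > 0" using b0 \<open>0 < \<alpha>\<close> \<open>0 < \<beta>\<close> by simp
    moreover have "fst (b k) \<in> K"
      using prefix(2)[of "2 * m"] 2 unfolding bob_move_ok_def by simp
    ultimately show ?thesis
      using h[of "map b [0..<Suc (Suc (2 * m))]"] unfolding 2 interleave_odd_turn
      by (simp del: upt_Suc add: last_map)
  qed
qed

lemma winning_strategy_interleave:
  assumes f: "winning_strategy K \<alpha> (\<beta> * \<alpha> * \<beta>) S f"
    and h: "\<And>ws. fst (last ws) \<in> K \<Longrightarrow> snd (last ws) > 0 \<Longrightarrow> alice_move_ok K \<alpha> (h ws) (last ws)"
    and "0 < \<alpha>" "0 < \<beta>"
  shows "winning_strategy K \<alpha> \<beta> S (interleave f h)"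
proof (rule winning_strategyI)
  fix b k
  assume "fst (b 0) \<in> K" "0 < snd (b 0)"
    and "\<And>j. j < k \<Longrightarrow> bob_move_ok K \<beta> (b (Suc j)) (interleave f h (map b [0..<Suc j]))"
  then show "alice_move_ok K \<alpha> (interleave f h (map b [0..<Suc k])) (b k)"
    using interleave_legal[where \<beta> = \<beta>, OF f h assms(3,4)] by blast
next
  fix b
  assume b0: "fst (b 0) \<in> K" "0 < snd (b 0)"
    and bob: "\<And>k. bob_move_ok K \<beta> (b (Suc k)) (interleave f h (map b [0..<Suc k]))"
  have "alice_move_ok K \<alpha> (interleave f h (map b [0..<Suc k])) (b k)" for k
    using interleave_legal[where \<beta> = \<beta> and b = b, OF f h \<open>0 < \<alpha>\<close> \<open>0 < \<beta>\<close> b0] bob by blast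
  then have "bob_move_ok K (\<beta> * \<alpha> * \<beta>) (b (2 * Suc j)) (f (map (\<lambda>i. b (2 * i)) [0..<Suc j]))" for j
    using bob by (intro interleave_even_subplay)
  then have "(\<Inter>k. cball (fst (b (2 * k))) (snd (b (2 * k)))) \<inter> K \<subseteq> S"
    using winning_strategy_outcome[OF f, of "\<lambda>i. b (2 * i)"] b0 by simp
  then show "(\<Inter>k. cball (fst (b k)) (snd (b k))) \<inter> K \<subseteq> S" by blast
qed

definition can_avoid_points :: "real set \<Rightarrow> real \<Rightarrow> real \<Rightarrow> bool" where
  "can_avoid_points K \<alpha> r0 \<longleftrightarrow>
    (\<forall>x\<in>K. \<forall>\<rho> z. 0 < \<rho> \<and> \<rho> \<le> r0 \<longrightarrow>
      (\<exists>a. alice_move_ok K \<alpha> a (x, \<rho>) \<and> z \<notin> cball (fst a) (snd a)))"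

definition avoid_move :: "real set \<Rightarrow> real \<Rightarrow> real \<times> real \<Rightarrow> real \<Rightarrow> real \<times> real" where
  "avoid_move K \<alpha> w z =
    (if \<exists>a. alice_move_ok K \<alpha> a w \<and> z \<notin> cball (fst a) (snd a)
     then SOME a. alice_move_ok K \<alpha> a w \<and> z \<notin> cball (fst a) (snd a)
     else (fst w, \<alpha> * snd w))"

lemma avoid_move_legal:
  assumes "fst w \<in> K" "0 \<le> snd w" "\<alpha> \<le> 1"
  shows "alice_move_ok K \<alpha> (avoid_move K \<alpha> w z) w"
proof (cases "\<exists>a. alice_move_ok K \<alpha> a w \<and> z \<notin> cball (fst a) (snd a)")
  case True
  from someI_ex[OF True] show ?thesis unfolding avoid_move_def by (simp only: True if_True)
next
  case False
  then have "avoid_move K \<alpha> w z = (fst w, \<alpha> * snd w)"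
    unfolding avoid_move_def by (simp only: False if_False)
  moreover have "\<alpha> * snd w \<le> snd w" using mult_right_mono[OF assms(3,2)] by simp
  ultimately show ?thesis using assms(1) unfolding alice_move_ok_def le_s_def by simp
qed

lemma avoid_move_avoids:
  assumes "can_avoid_points K \<alpha> r0" "fst w \<in> K" "0 < snd w" "snd w \<le> r0"
  shows "z \<notin> cball (fst (avoid_move K \<alpha> w z)) (snd (avoid_move K \<alpha> w z))"
proof -
  have avoidable: "\<exists>a. alice_move_ok K \<alpha> a w \<and> z \<notin> cball (fst a) (snd a)"
    using assms unfolding can_avoid_points_def by (metis prod.collapse)
  from someI_ex[OF avoidable] show ?thesis
    unfolding avoid_move_def by (simp only: avoidable if_True not_False_eq_True)
qed

lemma countable_enumeration_infinitely_often:
  assumes "countable A"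
  obtains z :: "nat \<Rightarrow> 'a" where "\<And>p N. p \<in> A \<Longrightarrow> \<exists>m\<ge>N. z m = p"
proof
  fix p N assume "p \<in> A"
  define m where "m = prod_encode (to_nat_on A p, N)"
  have "N \<le> m" unfolding m_def by (rule le_prod_encode_2)
  moreover have "from_nat_into A (fst (prod_decode m)) = p"
    unfolding m_def using assms \<open>p \<in> A\<close> by simp
  ultimately show "\<exists>m\<ge>N. from_nat_into A (fst (prod_decode m)) = p" by blast
qed

lemma geometric_eventually_le:
  fixes q c r :: real
  assumes "0 \<le> q" "q < 1" "0 < r"
  obtains N where "\<And>k. N \<le> k \<Longrightarrow> q ^ k * c \<le> r"
proof -
  have "(\<lambda>k. q ^ k * c) \<longlonglongrightarrow> 0"
    using assms(1,2) by (intro tendsto_mult_left_zero LIMSEQ_power_zero) auto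
  then have "eventually (\<lambda>k. q ^ k * c < r) sequentially"
    using assms(3) by (rule order_tendstoD)
  then show thesis using that unfolding eventually_sequentially by (meson less_imp_le)
qed

lemma winning_strategy_interleave_avoid:
  fixes K :: "real set" and \<alpha> :: real and z :: "nat \<Rightarrow> real"
    and f :: "(real \<times> real) list \<Rightarrow> real \<times> real"
  defines "g \<equiv> interleave f (\<lambda>ws. avoid_move K \<alpha> (last ws) (z (length ws div 2)))"
  assumes f: "winning_strategy K \<alpha> (\<beta> * \<alpha> * \<beta>) S f"
    and avoid: "can_avoid_points K \<alpha> r0" "0 < r0"
    and "0 < \<alpha>" "\<alpha> \<le> 1" "0 < \<beta>" "\<beta> < 1"
    and z: "\<And>p N. p \<in> S' \<Longrightarrow> \<exists>m\<ge>N. z m = p"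
  shows "winning_strategy K \<alpha> \<beta> (S - S') g"
proof -
  have g_win: "winning_strategy K \<alpha> \<beta> S g"
    unfolding g_def using f assms(5-7) by (intro winning_strategy_interleave avoid_move_legal) auto
  show ?thesis
  proof (rule winning_strategyI)
    fix b k
    assume "fst (b 0) \<in> K" "0 < snd (b 0)"
      and "\<And>j. j < k \<Longrightarrow> bob_move_ok K \<beta> (b (Suc j)) (g (map b [0..<Suc j]))"
    then show "alice_move_ok K \<alpha> (g (map b [0..<Suc k])) (b k)"
      by (rule winning_strategy_legal[OF g_win])
  next
    fix b
    assume b0: "fst (b 0) \<in> K" "0 < snd (b 0)"
      and bob: "\<And>k. bob_move_ok K \<beta> (b (Suc k)) (g (map b [0..<Suc k]))"
    have alice: "alice_move_ok K \<alpha> (g (map b [0..<Suc k])) (b k)" for k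
      using winning_strategy_legal[where b = b, OF g_win b0] bob by blast
    have radius: "snd (b k) = (\<beta> * \<alpha>) ^ k * snd (b 0)" for k
      by (rule play_radius) (use alice bob in blast)
    have "0 < \<beta> * \<alpha>" "\<beta> * \<alpha> < 1"
      using assms(5-8) mult_less_le_imp_less[of \<beta> 1 \<alpha> 1] by auto
    then obtain N where N: "\<And>k. N \<le> k \<Longrightarrow> (\<beta> * \<alpha>) ^ k * snd (b 0) \<le> r0"
      using geometric_eventually_le[of "\<beta> * \<alpha>" r0 "snd (b 0)"] avoid(2) by auto
    have "p \<notin> S'" if p: "p \<in> (\<Inter>k. cball (fst (b k)) (snd (b k)))" for p
    proof
      assume "p \<in> S'"
      then obtain m where "N \<le> m" "z (Suc m) = p"
        using z[of p "Suc N"] by (metis Suc_le_D Suc_le_mono)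
      define k where "k = Suc (2 * m)"
      have "fst (b k) \<in> K" "0 < snd (b k)" "snd (b k) \<le> r0"
        using bob[of "2 * m"] radius[of k] b0 \<open>0 < \<beta> * \<alpha>\<close> N[of k] \<open>N \<le> m\<close>
        unfolding k_def bob_move_ok_def by auto
      moreover have "g (map b [0..<Suc k]) = avoid_move K \<alpha> (b k) p"
        unfolding g_def k_def interleave_odd_turn
        by (simp del: upt_Suc add: last_map \<open>z (Suc m) = p\<close>)
      ultimately have "p \<notin> cball (fst (g (map b [0..<Suc k]))) (snd (g (map b [0..<Suc k])))"
        using avoid_move_avoids[OF avoid(1)] by simp
      moreover have "p \<in> cball (fst (g (map b [0..<Suc k]))) (snd (g (map b [0..<Suc k])))"
        using p le_s_cball_subset bob[of k] unfolding bob_move_ok_def by blast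
      ultimately show False by contradiction
    qed
    then show "(\<Inter>k. cball (fst (b k)) (snd (b k))) \<inter> K \<subseteq> S - S'"
      using winning_strategy_outcome[OF g_win b0 bob] by blast
  qed
qed

lemma winning_on_diff_countable:
  assumes win: "winning_on K \<alpha> S" and "0 < \<alpha>" "\<alpha> \<le> 1"
    and avoid: "can_avoid_points K \<alpha> r0" "0 < r0"
    and "countable S'"
  shows "winning_on K \<alpha> (S - S')"
  unfolding winning_on_iff_winning_strategy
proof (intro allI impI)
  fix \<beta> :: real assume \<beta>: "0 < \<beta> \<and> \<beta> < 1"
  have "\<beta> * \<alpha> * \<beta> \<le> \<beta>"
    using \<beta> assms(2,3) by (intro mult_left_le_one_le mult_le_one) auto
  then have "\<beta> * \<alpha> * \<beta> < 1" using \<beta> by linarith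
  moreover have "0 < \<beta> * \<alpha> * \<beta>" using \<beta> assms(2) by simp
  ultimately obtain f where f: "winning_strategy K \<alpha> (\<beta> * \<alpha> * \<beta>) S f"
    using win unfolding winning_on_iff_winning_strategy by blast
  obtain z :: "nat \<Rightarrow> real" where z: "\<And>p N. p \<in> S' \<Longrightarrow> \<exists>m\<ge>N. z m = p"
    using countable_enumeration_infinitely_often[OF \<open>countable S'\<close>] by blast
  have "winning_strategy K \<alpha> \<beta> (S - S')
      (interleave f (\<lambda>ws. avoid_move K \<alpha> (last ws) (z (length ws div 2))))"
    using avoid \<beta> assms(2,3) by (intro winning_strategy_interleave_avoid f z) auto
  then show "\<exists>g. winning_strategy K \<alpha> \<beta> (S - S') g" by blast
qed

lemma emeasure_compact_disjoint_msupp: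
  assumes sets: "sets \<mu> = sets borel" and "compact T" and disj: "T \<inter> msupp \<mu> = {}"
  shows "emeasure \<mu> T = 0"
proof -
  define \<B> where "\<B> = {ball t r | t r. 0 < r \<and> emeasure \<mu> (ball t r) = 0}"
  have open_\<B>: "open B" if "B \<in> \<B>" for B
    using that unfolding \<B>_def by auto
  have "T \<subseteq> \<Union>\<B>"
  proof
    fix t assume "t \<in> T"
    then have "t \<notin> msupp \<mu>" using disj by blast
    then obtain r where "0 < r" "\<not> 0 < emeasure \<mu> (ball t r)"
      unfolding msupp_def by blast
    then show "t \<in> \<Union>\<B>" unfolding \<B>_def by force
  qed
  then obtain \<F> where \<F>: "\<F> \<subseteq> \<B>" "finite \<F>" "T \<subseteq> \<Union>\<F>"
    using compactE[OF \<open>compact T\<close> _ open_\<B>] by blast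
  have "(\<Union>B\<in>\<F>. B) \<in> null_sets \<mu>"
  proof (rule null_sets_UN')
    show "countable \<F>" using \<F>(2) by (rule countable_finite)
    fix B assume "B \<in> \<F>"
    then obtain t r where "B = ball t r" "emeasure \<mu> (ball t r) = 0"
      using \<F>(1) unfolding \<B>_def by blast
    then show "B \<in> null_sets \<mu>" using sets by auto
  qed
  moreover have "T \<in> sets \<mu>"
    using sets \<open>compact T\<close> by (simp add: borel_closed compact_imp_closed)
  ultimately show ?thesis using \<F>(3) null_sets_subset[of "\<Union>B\<in>\<F>. B" \<mu> T] by auto
qed

lemma msupp_outside_cball:
  assumes sets: "sets \<mu> = sets borel"
    and less: "emeasure \<mu> (cball x r \<inter> cball z s) < emeasure \<mu> (cball x r)"
  shows "\<exists>p\<in>msupp \<mu>. dist x p \<le> r \<and> s \<le> dist z p"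
proof (rule ccontr)
  define T where "T = cball x r - ball z s"
  assume "\<not> (\<exists>p\<in>msupp \<mu>. dist x p \<le> r \<and> s \<le> dist z p)"
  then have "T \<inter> msupp \<mu> = {}" unfolding T_def by auto
  then have null: "emeasure \<mu> T = 0"
    using sets unfolding T_def by (intro emeasure_compact_disjoint_msupp) (auto simp: compact_diff)
  have measurable: "T \<in> sets \<mu>" "cball x r \<inter> cball z s \<in> sets \<mu>"
    using sets unfolding T_def by auto
  have "emeasure \<mu> (cball x r) \<le> emeasure \<mu> (T \<union> (cball x r \<inter> cball z s))"
    using measurable by (intro emeasure_mono) (auto simp: T_def)
  also have "\<dots> \<le> emeasure \<mu> T + emeasure \<mu> (cball x r \<inter> cball z s)"
    using measurable by (rule emeasure_subadditive)
  also have "\<dots> < emeasure \<mu> (cball x r)" using null less by simp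
  finally show False by simp
qed

lemma abs_decayingD:
  assumes "abs_decaying \<mu> C \<gamma>"
  obtains \<rho>0 where "0 < \<rho>0" "sets \<mu> = sets borel" "\<And>\<rho> x y \<epsilon>. 0 < \<rho> \<Longrightarrow> \<rho> \<le> \<rho>0 \<Longrightarrow>
      x \<in> msupp \<mu> \<Longrightarrow> 0 < \<epsilon> \<Longrightarrow> emeasure \<mu> (cball x \<rho> \<inter> cball y (\<epsilon> * \<rho>))
        < ennreal (C * \<epsilon> powr \<gamma>) * emeasure \<mu> (cball x \<rho>)"
  using assms unfolding abs_decaying_def locally_finite_borel_def by blast

lemma abs_decaying_const_gt_one:
  assumes "abs_decaying \<mu> C \<gamma>" "msupp \<mu> \<noteq> {}"
  shows "1 < C"
proof (rule ccontr)
  assume "\<not> 1 < C"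
  obtain x where "x \<in> msupp \<mu>" using assms(2) by blast
  moreover obtain \<rho>0 where "0 < \<rho>0" "sets \<mu> = sets borel" and dec: "\<And>\<rho> x y \<epsilon>. 0 < \<rho> \<Longrightarrow> \<rho> \<le> \<rho>0 \<Longrightarrow>
      x \<in> msupp \<mu> \<Longrightarrow> 0 < \<epsilon> \<Longrightarrow> emeasure \<mu> (cball x \<rho> \<inter> cball y (\<epsilon> * \<rho>))
        < ennreal (C * \<epsilon> powr \<gamma>) * emeasure \<mu> (cball x \<rho>)"
    by (rule abs_decayingD[OF assms(1)]) iprover
  ultimately have "emeasure \<mu> (cball x \<rho>0) < ennreal C * emeasure \<mu> (cball x \<rho>0)"
    using dec[of \<rho>0 x 1 x] by simp
  also have "\<dots> \<le> emeasure \<mu> (cball x \<rho>0)"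
    using mult_right_mono[of "ennreal C" 1] \<open>\<not> 1 < C\<close> by (simp add: ennreal_le_1)
  finally show False by simp
qed

lemma abs_decaying_can_avoid_points:
  assumes "abs_decaying \<mu> C \<gamma>" "0 < \<alpha>" "\<alpha> < 1" "C * (2 * \<alpha> / (1 - \<alpha>)) powr \<gamma> \<le> 1"
  obtains r0 where "0 < r0" "can_avoid_points (msupp \<mu>) \<alpha> r0"
proof -
  obtain \<rho>0 where "0 < \<rho>0" and sets: "sets \<mu> = sets borel" and dec: "\<And>\<rho> x y \<epsilon>. 0 < \<rho> \<Longrightarrow>
      \<rho> \<le> \<rho>0 \<Longrightarrow> x \<in> msupp \<mu> \<Longrightarrow> 0 < \<epsilon> \<Longrightarrow> emeasure \<mu> (cball x \<rho> \<inter> cball y (\<epsilon> * \<rho>))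
        < ennreal (C * \<epsilon> powr \<gamma>) * emeasure \<mu> (cball x \<rho>)"
    by (rule abs_decayingD[OF assms(1)]) iprover
  have "can_avoid_points (msupp \<mu>) \<alpha> \<rho>0"
    unfolding can_avoid_points_def
  proof (intro ballI allI impI)
    fix x \<rho> z assume x: "x \<in> msupp \<mu>" and \<rho>: "0 < \<rho> \<and> \<rho> \<le> \<rho>0"
    define \<epsilon> where "\<epsilon> = 2 * \<alpha> / (1 - \<alpha>)"
    have eps: "\<epsilon> * ((1 - \<alpha>) * \<rho>) = 2 * \<alpha> * \<rho>"
      unfolding \<epsilon>_def using assms(3) by (simp add: field_simps)
    have "0 < \<alpha> * \<rho>" using \<rho> assms(2) by simp
    then have "(1 - \<alpha>) * \<rho> \<le> \<rho>0"
      using \<rho> unfolding left_diff_distrib by linarith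
    moreover have "0 < (1 - \<alpha>) * \<rho>" "0 < \<epsilon>"
      using \<rho> assms(2,3) unfolding \<epsilon>_def by auto
    ultimately have "emeasure \<mu> (cball x ((1 - \<alpha>) * \<rho>) \<inter> cball z (\<epsilon> * ((1 - \<alpha>) * \<rho>)))
        < ennreal (C * \<epsilon> powr \<gamma>) * emeasure \<mu> (cball x ((1 - \<alpha>) * \<rho>))"
      using dec x by blast
    also have "\<dots> \<le> emeasure \<mu> (cball x ((1 - \<alpha>) * \<rho>))"
      using mult_right_mono[of "ennreal (C * \<epsilon> powr \<gamma>)" 1] assms(4)
      unfolding \<epsilon>_def by (simp add: ennreal_le_1)
    finally obtain p where p: "p \<in> msupp \<mu>" "dist x p \<le> (1 - \<alpha>) * \<rho>" "2 * \<alpha> * \<rho> \<le> dist z p"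
      using msupp_outside_cball[OF sets] unfolding eps by blast
    then have "alice_move_ok (msupp \<mu>) \<alpha> (p, \<alpha> * \<rho>) (x, \<rho>)"
      unfolding alice_move_ok_def le_s_def by (simp add: algebra_simps)
    moreover have "z \<notin> cball p (\<alpha> * \<rho>)"
      using p(3) \<open>0 < \<alpha> * \<rho>\<close> unfolding mem_cball dist_commute[of p z] by linarith
    ultimately show "\<exists>a. alice_move_ok (msupp \<mu>) \<alpha> a (x, \<rho>) \<and> z \<notin> cball (fst a) (snd a)"
      by force
  qed
  with \<open>0 < \<rho>0\<close> show thesis by (rule that)
qed

lemma decay_threshold_bounds:
  fixes C \<gamma> \<alpha> :: real
  assumes "1 < C" "0 < \<gamma>" "0 < \<alpha>" "\<alpha> \<le> (1/4) * (1 / (3 * C)) powr (1 / \<gamma>)"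
  shows "\<alpha> \<le> 1/4" "C * (2 * \<alpha> / (1 - \<alpha>)) powr \<gamma> \<le> 1"
proof -
  define t where "t = (1 / (3 * C)) powr (1 / \<gamma>)"
  have "t \<le> 1"
    unfolding t_def using assms(1,2) powr_mono2[of "1 / \<gamma>" "1 / (3 * C)" 1] by simp
  then show "\<alpha> \<le> 1/4" using assms(4) unfolding t_def[symmetric] by simp
  have "2 * \<alpha> / (1 - \<alpha>) \<le> 8/3 * \<alpha>"
    using assms(3) \<open>\<alpha> \<le> 1/4\<close> by (simp add: field_simps)
  also have "\<dots> \<le> t"
    using assms(4) powr_ge_zero[of "1 / (3 * C)" "1 / \<gamma>"] unfolding t_def
    by linarith
  finally have "(2 * \<alpha> / (1 - \<alpha>)) powr \<gamma> \<le> t powr \<gamma>"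
    using assms(2,3) \<open>\<alpha> \<le> 1/4\<close> by (intro powr_mono2) auto
  also have "\<dots> = 1 / (3 * C)" unfolding t_def using assms(1,2) by (simp add: powr_powr)
  finally show "C * (2 * \<alpha> / (1 - \<alpha>)) powr \<gamma> \<le> 1"
    using assms(1) by (simp add: field_simps)
qed

theorem corollary3p3:
  fixes \<mu> :: "real measure" and C \<gamma> \<alpha> :: real and S S' :: "real set"
  assumes "abs_decaying \<mu> C \<gamma>"
    and "0 < \<alpha>" and "\<alpha> \<le> (1/4) * (1 / (3 * C)) powr (1 / \<gamma>)"
    and "winning_on (msupp \<mu>) \<alpha> S"
    and "S' \<subseteq> S" and "countable S'"
  shows "winning_on (msupp \<mu>) \<alpha> (S - S')"
proof (cases "msupp \<mu> = {}")
  case True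
  then show ?thesis unfolding winning_on_def by simp
next
  case False
  have "1 < C" "0 < \<gamma>"
    using abs_decaying_const_gt_one[OF assms(1) False] assms(1) unfolding abs_decaying_def by auto
  then have "\<alpha> \<le> 1/4" "C * (2 * \<alpha> / (1 - \<alpha>)) powr \<gamma> \<le> 1"
    using decay_threshold_bounds assms(2,3) by auto
  then obtain r0 where "0 < r0" "can_avoid_points (msupp \<mu>) \<alpha> r0"
    using abs_decaying_can_avoid_points[OF assms(1,2)] by force
  then show ?thesis
    using winning_on_diff_countable[OF assms(4,2)] \<open>\<alpha> \<le> 1/4\<close> assms(6) by simp
qed

end
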